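(* Let $L$ be a connected Lie group, $V$ a vector subgroup of $L$, and $P$ a one-parameter subgroup of $L$ normalizing $V$ such that the conjugation action of $P$ on $V$ is irreducible and nontrivial. Let $H=PV$, let $p\in P$ be nontrivial, and let $\sigma(p):V\to V$ be the conjugation action of $p$ on $V$. Then: (i) every one-parameter subgroup of $L$ contained in $H$ is either contained in $V$ or is of the form $wPw^{-1}$ for some $w\in V$; (ii) if $\sigma(p)$ is nontrivial, then for every $v\in V$ the element $pv$ is contained in a unique one-parameter subgroup contained in $H$; (iii) if $\sigma(p)$ is trivial, then for every $v\in V$ with $v\neq 0$, $pv$ is not contained in any one-parameter subgroup of $H$.
   Context: A vector subgroup is a subgroup topologically isomorphic to $\mathbb R^d$ for some $d\ge1$ (with the induced topology), regarded as a real vector space with additive notation ($0$ its identity). One-parameter subgroups are regarded as subgroups (images of continuous homomorphisms $\mathbb R\to L$). $H$ need not be closed; it is a Lie subgroup whose Lie algebra is the sum of those of $P$ and $V$. *)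

theory Defs
  imports "HOL-Analysis.Analysis" "HOL-Algebra.Coset"
begin

fun Ck_on :: "nat \<Rightarrow> 'a::euclidean_space set \<Rightarrow> ('a \<Rightarrow> 'b::real_normed_vector) \<Rightarrow> bool" where
  "Ck_on 0 S f = continuous_on S f"
| "Ck_on (Suc k) S f =
     ((\<forall>x\<in>S. f differentiable (at x)) \<and>
      (\<forall>i\<in>Basis. Ck_on k S (\<lambda>x. frechet_derivative f (at x) i)))"

definition smooth_on :: "'a::euclidean_space set \<Rightarrow> ('a \<Rightarrow> 'b::real_normed_vector) \<Rightarrow> bool" where
  "smooth_on S f \<longleftrightarrow> (\<forall>k. Ck_on k S f)"

definition is_chart :: "'g topology \<Rightarrow> 'g set \<Rightarrow> ('g \<Rightarrow> 'e::euclidean_space) \<Rightarrow> bool" where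
  "is_chart T U \<phi> \<longleftrightarrow> openin T U \<and> open (\<phi> ` U) \<and>
     homeomorphic_map (subtopology T U) (top_of_set (\<phi> ` U)) \<phi>"

definition smooth_atlas :: "'g topology \<Rightarrow> ('g set \<times> ('g \<Rightarrow> 'e::euclidean_space)) set \<Rightarrow> bool" where
  "smooth_atlas T A \<longleftrightarrow>
     (\<forall>(U, \<phi>)\<in>A. is_chart T U \<phi>) \<and>
     topspace T \<subseteq> (\<Union>(U, \<phi>)\<in>A. U) \<and>
     (\<forall>(U, \<phi>)\<in>A. \<forall>(W, \<psi>)\<in>A. smooth_on (\<phi> ` (U \<inter> W)) (\<psi> \<circ> inv_into U \<phi>))"

definition prod_atlas ::
  "('g set \<times> ('g \<Rightarrow> 'e)) set \<Rightarrow> ('h set \<times> ('h \<Rightarrow> 'f)) set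
     \<Rightarrow> (('g \<times> 'h) set \<times> ('g \<times> 'h \<Rightarrow> 'e \<times> 'f)) set" where
  "prod_atlas A B = {(U \<times> W, \<lambda>(x, y). (\<phi> x, \<psi> y)) | U \<phi> W \<psi>. (U, \<phi>) \<in> A \<and> (W, \<psi>) \<in> B}"

definition smooth_map ::
  "'g topology \<Rightarrow> ('g set \<times> ('g \<Rightarrow> 'e::euclidean_space)) set \<Rightarrow>
   'h topology \<Rightarrow> ('h set \<times> ('h \<Rightarrow> 'f::euclidean_space)) set \<Rightarrow> ('g \<Rightarrow> 'h) \<Rightarrow> bool" where
  "smooth_map T A S B F \<longleftrightarrow> continuous_map T S F \<and>
     (\<forall>(U, \<phi>)\<in>A. \<forall>(W, \<psi>)\<in>B. smooth_on (\<phi> ` (U \<inter> F -` W)) (\<psi> \<circ> F \<circ> inv_into U \<phi>))"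

definition lie_group ::
  "('g, 'b) monoid_scheme \<Rightarrow> 'g topology \<Rightarrow> ('g set \<times> ('g \<Rightarrow> 'e::euclidean_space)) set \<Rightarrow> bool" where
  "lie_group G T A \<longleftrightarrow> group G \<and> topspace T = carrier G \<and> Hausdorff_space T \<and>
     smooth_atlas T A \<and>
     smooth_map (prod_topology T T) (prod_atlas A A) T A (\<lambda>(x, y). x \<otimes>\<^bsub>G\<^esub> y) \<and>
     smooth_map T A T A (\<lambda>x. inv\<^bsub>G\<^esub> x)"

definition one_param_subgroup :: "('g, 'b) monoid_scheme \<Rightarrow> 'g topology \<Rightarrow> 'g set \<Rightarrow> bool" where
  "one_param_subgroup G T Q \<longleftrightarrow>
     (\<exists>c. continuous_map euclideanreal T c \<and> (\<forall>s t. c (s + t) = c s \<otimes>\<^bsub>G\<^esub> c t) \<and> Q = range c)"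

text \<open>f is a topological group isomorphism from R^d (a Euclidean space 'v) onto the subgroup V
  (with the induced topology); V is then a vector subgroup, with vector structure transported by f.\<close>
definition vector_subgroup_param ::
  "('g, 'b) monoid_scheme \<Rightarrow> 'g topology \<Rightarrow> 'g set \<Rightarrow> ('v::euclidean_space \<Rightarrow> 'g) \<Rightarrow> bool" where
  "vector_subgroup_param G T V f \<longleftrightarrow> subgroup V G \<and> f ` UNIV = V \<and>
     (\<forall>x y. f (x + y) = f x \<otimes>\<^bsub>G\<^esub> f y) \<and>
     homeomorphic_map euclidean (subtopology T V) f"

end

theory Submission
  imports Defs
begin

(* Write P = range c and identify V with R^d via f.  A one-parameter subgroup gamma of H = P V has
   the form gamma t = c (sigma t) * f (X t).  Irreducibility and nontriviality make P and V meet
   trivially (an element of P inside V would be a nonzero vector fixed by all of P), so the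
   P-component c (sigma t) is well defined, and the kernel of c is discrete.  A Baire category
   argument over compact pieces of R x R^d shows that sigma can be chosen continuous near 0; being
   additive modulo the discrete kernel, it is then linear, sigma t = l t.  If l = 0, gamma lies in V.
   Otherwise, after reparametrization, X is a 1-cocycle for the action of P on V.  The fixed space of
   any element of P is invariant, hence either 0 or everything, so some element acts without nonzero
   fixed vectors; this makes the cocycle a coboundary, X r = sigma(c r)^-1 w - w, which says exactly
   that gamma is the conjugate of P by f w.  Parts (ii) and (iii) then amount to solving
   sigma(p)^-1 w - w = x for w: uniquely when sigma(p) is nontrivial, and only for x = 0 when it is
   trivial. *)

section \<open>Additive functions and closed subgroups of the real line\<close>

lemma additive_continuous_real_fun:
  fixes h :: "real \<Rightarrow> 'a::real_normed_vector"
  assumes add: "\<And>r s. h (r + s) = h r + h s" and cont: "continuous_on UNIV h"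
  shows "h r = r *\<^sub>R h 1"
proof -
  have h_of_int: "h (of_int m * r) = of_int m *\<^sub>R h r" for m r
  proof (induction m rule: int_induct[where k = 0])
    case base
    show ?case using add[of 0 0] by simp
  next
    case (step1 i)
    have "of_int (i + 1) * r = of_int i * r + r" by (simp add: algebra_simps)
    then show ?case using add[of "of_int i * r" r] step1.IH by (simp add: algebra_simps)
  next
    case (step2 i)
    have "of_int i * r = of_int (i - 1) * r + r" by (simp add: algebra_simps)
    then show ?case using add[of "of_int (i - 1) * r" r] step2.IH by (simp add: algebra_simps)
  qed
  have on_rats: "h q - q *\<^sub>R h 1 = 0" if "q \<in> \<rat>" for q
  proof -
    obtain m n where q: "q = of_int m / of_int n" and n: "n > 0"
      using \<open>q \<in> \<rat>\<close> by (rule Rats_cases')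
    have eq: "of_int n *\<^sub>R h q = of_int m *\<^sub>R h 1"
      using h_of_int[of n q] h_of_int[of m 1] q n by simp
    have "h q = inverse (of_int n) *\<^sub>R (of_int n *\<^sub>R h q)" using n by simp
    also have "\<dots> = inverse (of_int n) *\<^sub>R (of_int m *\<^sub>R h 1)" by (simp only: eq)
    also have "\<dots> = q *\<^sub>R h 1" by (simp add: q divide_inverse_commute)
    finally show ?thesis by simp
  qed
  have "continuous_on (closure \<rat>) (\<lambda>r. h r - r *\<^sub>R h 1)"
    using continuous_on_subset[OF cont subset_UNIV] by (intro continuous_intros)
  then have "h r - r *\<^sub>R h 1 = 0"
    by (rule continuous_constant_on_closure) (simp_all add: on_rats Rats_closure_real)
  then show ?thesis by simp
qed

lemma additive_continuous_imp_linear: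
  fixes g :: "'a::real_normed_vector \<Rightarrow> 'b::real_normed_vector"
  assumes add: "\<And>x y. g (x + y) = g x + g y" and cont: "continuous_on UNIV g"
  shows "linear g"
proof (rule linearI)
  show "g (x + y) = g x + g y" for x y by (rule add)
  show "g (r *\<^sub>R x) = r *\<^sub>R g x" for r x
  proof -
    have "continuous_on UNIV (\<lambda>r. g (r *\<^sub>R x))"
      by (intro continuous_on_compose2[OF cont] continuous_intros) auto
    then show ?thesis
      using additive_continuous_real_fun[of "\<lambda>r. g (r *\<^sub>R x)" r] add by (simp add: scaleR_add_left)
  qed
qed

lemma locally_additive_mult_of_nat:
  fixes \<tau> :: "real \<Rightarrow> 'a::real_normed_vector"
  assumes add: "\<And>h k. \<bar>h\<bar> < r \<Longrightarrow> \<bar>k\<bar> < r \<Longrightarrow> \<bar>h + k\<bar> < r \<Longrightarrow> \<tau> (h + k) = \<tau> h + \<tau> k"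
    and "\<bar>real n * y\<bar> < r"
  shows "\<tau> (real n * y) = real n *\<^sub>R \<tau> y"
  using assms(2)
proof (induction n)
  case 0
  then show ?case using add[of 0 0] by simp
next
  case (Suc n)
  have "\<bar>real n * y\<bar> \<le> \<bar>real (Suc n) * y\<bar>" and "\<bar>y\<bar> \<le> \<bar>real (Suc n) * y\<bar>"
    using mult_right_mono[of 1 "real (Suc n)" "\<bar>y\<bar>"] by (simp_all add: abs_mult mult_right_mono)
  then have "\<bar>real n * y\<bar> < r" and "\<bar>y\<bar> < r" using Suc.prems by linarith+
  moreover have "real (Suc n) * y = real n * y + y" by (simp add: algebra_simps)
  ultimately have "\<tau> (real (Suc n) * y) = \<tau> (real n * y) + \<tau> y"
    using add[of "real n * y" y] Suc.prems by simp
  then show ?case using Suc.IH \<open>\<bar>real n * y\<bar> < r\<close> by (simp add: algebra_simps)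
qed

lemma locally_additive_rescale_eq:
  fixes \<tau> :: "real \<Rightarrow> 'a::real_normed_vector"
  assumes add: "\<And>h k. \<bar>h\<bar> < r \<Longrightarrow> \<bar>k\<bar> < r \<Longrightarrow> \<bar>h + k\<bar> < r \<Longrightarrow> \<tau> (h + k) = \<tau> h + \<tau> k"
    and "n > 0" "m > 0" "\<bar>t / real n\<bar> < r" "\<bar>t / real m\<bar> < r"
  shows "real n *\<^sub>R \<tau> (t / real n) = real m *\<^sub>R \<tau> (t / real m)"
proof -
  define a where "a = t / (real n * real m)"
  have "t / real n = real m * a" "t / real m = real n * a"
    using assms(2,3) by (simp_all add: a_def field_simps)
  then have "\<tau> (t / real n) = real m *\<^sub>R \<tau> a" "\<tau> (t / real m) = real n *\<^sub>R \<tau> a"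
    using locally_additive_mult_of_nat[OF add] assms(4,5) by simp_all
  then show ?thesis by (simp add: mult.commute)
qed

lemma locally_additive_imp_linear:
  fixes \<tau> :: "real \<Rightarrow> 'a::real_normed_vector"
  assumes "r > 0"
    and add: "\<And>h k. \<bar>h\<bar> < r \<Longrightarrow> \<bar>k\<bar> < r \<Longrightarrow> \<bar>h + k\<bar> < r \<Longrightarrow> \<tau> (h + k) = \<tau> h + \<tau> k"
    and cont: "continuous_on (ball 0 r) \<tau>"
  shows "\<exists>l. \<forall>h. \<bar>h\<bar> < r \<longrightarrow> \<tau> h = h *\<^sub>R l"
proof -
  \<comment> \<open>\<open>\<Gamma>\<close> extends \<open>\<tau>\<close> to an additive function on \<open>\<real>\<close> by rescaling into \<open>ball 0 r\<close>.\<close>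
  define N where "N b = nat \<lceil>b / r\<rceil> + 1" for b
  have N_pos: "N b > 0" for b by (simp add: N_def)
  have N_bound: "\<bar>t / real n\<bar> < r" if "\<bar>t\<bar> \<le> b" "N b \<le> n" for t b n
  proof -
    have "b / r < real n" using that(2) unfolding N_def by linarith
    then have "\<bar>t\<bar> < real n * r" using that(1) \<open>r > 0\<close> by (simp add: pos_divide_less_eq)
    then show ?thesis using N_pos[of b] that(2) by (simp add: abs_divide pos_divide_less_eq mult.commute)
  qed
  define \<Gamma> where "\<Gamma> t = real (N \<bar>t\<bar>) *\<^sub>R \<tau> (t / real (N \<bar>t\<bar>))" for t
  have \<Gamma>_eq: "\<Gamma> t = real n *\<^sub>R \<tau> (t / real n)" if "n > 0" "\<bar>t / real n\<bar> < r" for n t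
    unfolding \<Gamma>_def
    using locally_additive_rescale_eq[OF add N_pos that(1) N_bound[of t "\<bar>t\<bar>" "N \<bar>t\<bar>"] that(2)] by simp
  have "\<Gamma> (x + y) = \<Gamma> x + \<Gamma> y" for x y
  proof -
    define n where "n = N (\<bar>x\<bar> + \<bar>y\<bar>)"
    have small: "\<bar>x / real n\<bar> < r" "\<bar>y / real n\<bar> < r" "\<bar>(x + y) / real n\<bar> < r"
      using N_bound[of _ "\<bar>x\<bar> + \<bar>y\<bar>" n] by (simp_all add: n_def abs_triangle_ineq)
    have "n > 0" by (simp add: n_def N_pos)
    have "\<Gamma> (x + y) = real n *\<^sub>R \<tau> ((x + y) / real n)"
      and "\<Gamma> x = real n *\<^sub>R \<tau> (x / real n)" and "\<Gamma> y = real n *\<^sub>R \<tau> (y / real n)"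
      using \<Gamma>_eq[OF \<open>n > 0\<close>] small by simp_all
    moreover have "\<tau> ((x + y) / real n) = \<tau> (x / real n) + \<tau> (y / real n)"
      using add small by (simp add: add_divide_distrib)
    ultimately show ?thesis by (simp add: scaleR_add_right)
  qed
  moreover have "continuous_on UNIV \<Gamma>"
  proof (rule continuous_at_imp_continuous_on, intro ballI)
    fix t0 :: real
    define n where "n = N (\<bar>t0\<bar> + 1)"
    have "n > 0" by (simp add: n_def N_pos)
    have small: "\<bar>t / real n\<bar> < r" if "t \<in> ball t0 1" for t
      using that N_bound[of t "\<bar>t0\<bar> + 1" n] by (auto simp: n_def dist_real_def)
    have "continuous_on (ball t0 1) (\<lambda>t. real n *\<^sub>R \<tau> (t / real n))"
      by (intro continuous_intros continuous_on_compose2[OF cont]) (use small \<open>n > 0\<close> in auto)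
    then have "continuous_on (ball t0 1) \<Gamma>"
      by (rule continuous_on_eq) (use \<Gamma>_eq[OF \<open>n > 0\<close> small] in simp)
    then show "isCont \<Gamma> t0"
      by (simp add: continuous_on_interior)
  qed
  ultimately have \<Gamma>_linear: "\<Gamma> h = h *\<^sub>R \<Gamma> 1" for h
    by (rule additive_continuous_real_fun)
  show ?thesis
  proof (intro exI allI impI)
    fix h :: real assume "\<bar>h\<bar> < r"
    then show "\<tau> h = h *\<^sub>R \<Gamma> 1" using \<Gamma>_eq[of 1 h] \<Gamma>_linear[of h] by simp
  qed
qed

lemma closed_real_subgroup_eq_UNIV:
  fixes K :: "real set"
  assumes "closed K" and "0 \<in> K"
    and add: "\<And>p q. p \<in> K \<Longrightarrow> q \<in> K \<Longrightarrow> p + q \<in> K"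
    and minus: "\<And>p. p \<in> K \<Longrightarrow> - p \<in> K"
    and small: "\<And>e. e > 0 \<Longrightarrow> \<exists>p\<in>K. p \<noteq> 0 \<and> \<bar>p\<bar> < e"
  shows "K = UNIV"
proof -
  have multiple: "of_int n * p \<in> K" if "p \<in> K" for n p
  proof (induction n rule: int_induct[where k = 0])
    case (step1 i)
    have "of_int (i + 1) * p = of_int i * p + p" by (simp add: algebra_simps)
    then show ?case using add[OF step1.IH that] by simp
  next
    case (step2 i)
    have "of_int (i - 1) * p = of_int i * p + - p" by (simp add: algebra_simps)
    then show ?case using add[OF step2.IH minus[OF that]] by simp
  qed (use \<open>0 \<in> K\<close> in simp)
  have "t \<in> K" for t
  proof (rule closed_approachable[OF \<open>closed K\<close>, THEN iffD1], intro allI impI)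
    fix e :: real assume "e > 0"
    then obtain p where p: "p \<in> K" "p \<noteq> 0" "\<bar>p\<bar> < e" using small by blast
    define n where "n = \<lfloor>t / p\<rfloor>"
    have "0 \<le> t / p - of_int n" "t / p - of_int n < 1" unfolding n_def by linarith+
    moreover have "t - of_int n * p = p * (t / p - of_int n)" using p(2) by (simp add: field_simps)
    ultimately have "\<bar>t - of_int n * p\<bar> < \<bar>p\<bar>"
      using p(2) by (simp add: abs_mult mult_less_cancel_left1)
    then have "\<bar>t - of_int n * p\<bar> < e" using p(3) by linarith
    then show "\<exists>y\<in>K. dist y t < e"
      using multiple[OF p(1)] by (auto simp: dist_real_def abs_minus_commute)
  qed
  then show ?thesis by blast
qed

lemma closed_cover_has_interior:
  fixes C :: "'i::countable \<Rightarrow> 'a::euclidean_space set"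
  assumes "\<And>i. closed (C i)" and "(\<Union>i. C i) = UNIV"
  shows "\<exists>i. interior (C i) \<noteq> {}"
proof (rule ccontr)
  assume "\<nexists>i. interior (C i) \<noteq> {}"
  then have "euclidean interior_of (\<Union>(range C)) = {}"
    using assms(1) by (intro Baire_category_alt) (auto simp: completely_metrizable_space_euclidean)
  with assms(2) show False by simp
qed

lemma UN_interval_times_cball_eq_UNIV:
  fixes d :: real
  assumes "d > 0"
  shows "(\<Union>(k, n). {of_int k * d .. of_int k * d + d} \<times> cball (0::'a::real_normed_vector) (real n)) = UNIV"
proof -
  have mem: "(s, x) \<in> {of_int \<lfloor>s / d\<rfloor> * d .. of_int \<lfloor>s / d\<rfloor> * d + d} \<times> cball 0 (real (nat \<lceil>norm x\<rceil>))"
    for s and x :: 'a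
  proof -
    have "of_int \<lfloor>s / d\<rfloor> \<le> s / d" "s / d \<le> of_int \<lfloor>s / d\<rfloor> + 1" by linarith+
    then have "of_int \<lfloor>s / d\<rfloor> * d \<le> s" "s \<le> (of_int \<lfloor>s / d\<rfloor> + 1) * d"
      using assms by (simp_all only: pos_le_divide_eq pos_divide_le_eq)
    moreover have "norm x \<le> real (nat \<lceil>norm x\<rceil>)" by linarith
    ultimately show ?thesis by (simp add: algebra_simps)
  qed
  have "(s, x) \<in> (\<Union>(k, n). {of_int k * d .. of_int k * d + d} \<times> cball (0::'a) (real n))" for s x
    using mem[of s x] by (intro UN_I[of "(\<lfloor>s / d\<rfloor>, nat \<lceil>norm x\<rceil>)"]) auto
  then show ?thesis by auto
qed

section \<open>A one-parameter subgroup normalizing a vector subgroup\<close>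

lemma (in group) inv_mult_cancel [simp]: "a \<in> carrier G \<Longrightarrow> b \<in> carrier G \<Longrightarrow> inv a \<otimes> (a \<otimes> b) = b"
  by (simp flip: m_assoc)

lemma (in group) mult_inv_cancel [simp]: "a \<in> carrier G \<Longrightarrow> b \<in> carrier G \<Longrightarrow> a \<otimes> (inv a \<otimes> b) = b"
  by (simp flip: m_assoc)

text \<open>The one-parameter subgroup is \<open>P = range c\<close>; the vector subgroup \<open>V = range f\<close> is identified
  with \<open>'v\<close> through \<open>f\<close>.\<close>

locale vector_normalizer = group G for G (structure) +
  fixes T :: "'g topology" and V :: "'g set" and f :: "'v::euclidean_space \<Rightarrow> 'g"
    and c :: "real \<Rightarrow> 'g"
  assumes topspace_T: "topspace T = carrier G"
    and Hausdorff_T: "Hausdorff_space T"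
    and continuous_mult: "continuous_map (prod_topology T T) T (\<lambda>(x, y). x \<otimes> y)"
    and vector_subgroup: "vector_subgroup_param G T V f"
    and continuous_c: "continuous_map euclideanreal T c"
    and c_add: "c (s + t) = c s \<otimes> c t"
    and c_normalizes: "v \<in> V \<Longrightarrow> c s \<otimes> v \<otimes> inv (c s) \<in> V"
begin

lemma continuous_map_in_carrier: "continuous_map X T g \<Longrightarrow> x \<in> topspace X \<Longrightarrow> g x \<in> carrier G"
  using continuous_map_image_subset_topspace topspace_T by blast

lemma c_carrier [simp]: "c s \<in> carrier G"
  using continuous_map_in_carrier[OF continuous_c] by simp

lemma c_zero [simp]: "c 0 = \<one>"
  using c_add[of 0 0] by simp

lemma c_minus: "c (- s) = inv (c s)"
  using c_add[of "- s" s] by (metis add.left_inverse c_zero c_carrier inv_equality)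

lemma c_diff: "c (s - t) = c s \<otimes> inv (c t)"
  using c_add[of s "- t"] by (simp add: c_minus)

lemma subgroup_V: "subgroup V G"
  and range_f: "range f = V"
  and f_add: "f (x + y) = f x \<otimes> f y"
  and homeomorphic_f: "homeomorphic_map euclidean (subtopology T V) f"
  using vector_subgroup unfolding vector_subgroup_param_def by auto

lemma f_in_V [simp]: "f x \<in> V"
  using range_f by blast

lemma f_carrier [simp]: "f x \<in> carrier G"
  using subgroup.subset[OF subgroup_V] by auto

lemma f_zero [simp]: "f 0 = \<one>"
  using f_add[of 0 0] by simp

lemma f_minus: "f (- x) = inv (f x)"
  using f_add[of "- x" x] by (metis add.left_inverse f_zero f_carrier inv_equality)

lemma f_diff: "f (x - y) = f x \<otimes> inv (f y)"
  using f_add[of x "- y"] by (simp add: f_minus)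

lemma inj_f: "inj f"
  using homeomorphic_f homeomorphic_imp_injective_map by fastforce

lemma f_eq_iff [simp]: "f x = f y \<longleftrightarrow> x = y"
  using inj_f by (simp add: inj_eq)

definition coord :: "'g \<Rightarrow> 'v" where
  "coord = inv_into UNIV f"

lemma coord_f [simp]: "coord (f x) = x"
  using inj_f by (simp add: coord_def)

lemma f_coord [simp]: "v \<in> V \<Longrightarrow> f (coord v) = v"
  using range_f by (metis coord_def f_inv_into_f)

lemma coord_eq_0_iff: "v \<in> V \<Longrightarrow> coord v = 0 \<longleftrightarrow> v = \<one>"
  by (metis coord_f f_coord f_zero)

lemma continuous_f: "continuous_map euclidean T f"
  using homeomorphic_f homeomorphic_imp_continuous_map continuous_map_into_fulltopology by blast

lemma continuous_coord: "continuous_map (subtopology T V) euclidean coord"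
proof -
  obtain g where g: "homeomorphic_maps euclidean (subtopology T V) f g"
    using homeomorphic_f homeomorphic_map_maps by blast
  then have "continuous_map (subtopology T V) euclidean g"
    by (simp add: homeomorphic_maps_def)
  moreover have "g v = coord v" if "v \<in> topspace (subtopology T V)" for v
    using g that unfolding homeomorphic_maps_def by (metis coord_f)
  ultimately show ?thesis by (rule continuous_map_eq)
qed

lemma continuous_map_mult:
  "continuous_map X T g \<Longrightarrow> continuous_map X T h \<Longrightarrow> continuous_map X T (\<lambda>x. g x \<otimes> h x)"
  using continuous_map_compose[OF continuous_map_pairedI continuous_mult] by (simp add: o_def)

lemma continuous_map_const_carrier: "z \<in> carrier G \<Longrightarrow> continuous_map X T (\<lambda>_. z)"
  by (simp add: topspace_T)

text \<open>\<open>act s\<close> is the paper's \<open>\<sigma>(c s)\<close>, read in the coordinates given by \<open>f\<close>.\<close>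

definition act :: "real \<Rightarrow> 'v \<Rightarrow> 'v" where
  "act s x = coord (c s \<otimes> f x \<otimes> inv (c s))"

lemma f_act: "f (act s x) = c s \<otimes> f x \<otimes> inv (c s)"
  by (simp add: act_def c_normalizes)

lemma act_add: "act s (x + y) = act s x + act s y"
  by (rule injD[OF inj_f]) (simp add: f_act f_add m_assoc)

lemma act_act: "act s (act t x) = act (s + t) x"
  by (rule injD[OF inj_f]) (simp add: f_act c_add m_assoc inv_mult_group)

lemma act_zero [simp]: "act 0 x = x"
  by (rule injD[OF inj_f]) (simp add: f_act)

lemma act_commute: "act s (act t x) = act t (act s x)"
  by (simp add: act_act add.commute)

lemma act_minus_act [simp]: "act (- s) (act s x) = x" and act_act_minus [simp]: "act s (act (- s) x) = x"
  by (simp_all add: act_act)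

lemma act_cong: "c s = c t \<Longrightarrow> act s x = act t x"
  by (simp add: act_def)

lemma act_id_iff: "(\<forall>x. act s x = x) \<longleftrightarrow> (\<forall>v\<in>V. c s \<otimes> v \<otimes> inv (c s) = v)"
proof
  assume "\<forall>x. act s x = x"
  then show "\<forall>v\<in>V. c s \<otimes> v \<otimes> inv (c s) = v" by (metis f_act f_coord)
next
  assume "\<forall>v\<in>V. c s \<otimes> v \<otimes> inv (c s) = v"
  then show "\<forall>x. act s x = x" by (intro allI injD[OF inj_f]) (simp add: f_act)
qed

lemma continuous_act: "continuous_on UNIV (act s)"
proof -
  have "continuous_map euclidean T (\<lambda>x. c s \<otimes> f x \<otimes> inv (c s))"
    by (intro continuous_map_mult continuous_map_const_carrier continuous_f) auto
  then have "continuous_map euclidean (subtopology T V) (\<lambda>x. c s \<otimes> f x \<otimes> inv (c s))"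
    by (simp add: continuous_map_into_subtopology c_normalizes)
  from continuous_map_compose[OF this continuous_coord]
  show ?thesis by (simp add: o_def act_def[abs_def])
qed

lemma linear_act: "linear (act s)"
  using act_add continuous_act by (rule additive_continuous_imp_linear)

lemma act_diff: "act s (x - y) = act s x - act s y"
  by (rule linear_diff[OF linear_act])

lemma bij_act_minus_id:
  assumes "\<And>x. act s x = x \<Longrightarrow> x = 0"
  shows "bij (\<lambda>w. act s w - w)"
proof -
  have lin: "linear (\<lambda>w. act s w - w)"
    by (rule linearI) (simp_all add: act_add linear_scale[OF linear_act] algebra_simps)
  moreover have "inj (\<lambda>w. act s w - w)"
  proof (rule injI)
    fix x y assume eq: "act s x - x = act s y - y"
    have "act s (x - y) = act s x - act s y" by (rule act_diff)
    also have "\<dots> = x - y" using eq by (simp add: algebra_simps)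
    finally have "act s (x - y) = x - y" .
    then show "x = y" using assms[of "x - y"] by simp
  qed
  ultimately show ?thesis using linear_injective_imp_surjective by (auto simp: bij_def)
qed

lemma mult_c_f: "(c s \<otimes> f x) \<otimes> (c t \<otimes> f y) = c (s + t) \<otimes> f (act (- t) x + y)"
  by (simp add: c_add f_add f_act c_minus m_assoc)

lemma inv_c_f: "inv (c s \<otimes> f x) = c (- s) \<otimes> f (act s (- x))"
  by (simp add: f_act f_minus c_minus m_assoc inv_mult_group)

lemma conj_c: "f w \<otimes> c s \<otimes> inv (f w) = c s \<otimes> f (act (- s) w - w)"
  by (simp add: f_diff f_act c_minus m_assoc)

lemma one_param_subgroup_conj:
  "one_param_subgroup G T ((\<lambda>q. f w \<otimes> q \<otimes> inv (f w)) ` range c)"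
proof -
  have "continuous_map euclideanreal T (\<lambda>s. f w \<otimes> c s \<otimes> inv (f w))"
    by (intro continuous_map_mult continuous_map_const_carrier continuous_c) auto
  moreover have "f w \<otimes> c (s + t) \<otimes> inv (f w) = (f w \<otimes> c s \<otimes> inv (f w)) \<otimes> (f w \<otimes> c t \<otimes> inv (f w))"
    for s t by (simp add: c_add m_assoc)
  ultimately show ?thesis
    unfolding one_param_subgroup_def by (intro exI[of _ "\<lambda>s. f w \<otimes> c s \<otimes> inv (f w)"]) auto
qed

definition pv :: "real \<times> 'v \<Rightarrow> 'g" where
  "pv z = c (fst z) \<otimes> f (snd z)"

lemma set_mult_range_c_V_eq: "range c <#> V = range pv"
proof
  show "range c <#> V \<subseteq> range pv"
  proof
    fix y assume "y \<in> range c <#> V"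
    then obtain s v where "v \<in> V" "y = c s \<otimes> v" by (auto simp: set_mult_def)
    then have "y = pv (s, coord v)" by (simp add: pv_def)
    then show "y \<in> range pv" by blast
  qed
  show "range pv \<subseteq> range c <#> V"
    by (auto simp: set_mult_def pv_def) (use f_in_V in blast)
qed

lemma conj_range_c_subset: "(\<lambda>q. f w \<otimes> q \<otimes> inv (f w)) ` range c \<subseteq> range c <#> V"
proof
  fix y assume "y \<in> (\<lambda>q. f w \<otimes> q \<otimes> inv (f w)) ` range c"
  then obtain s where "y = pv (s, act (- s) w - w)" by (auto simp: conj_c pv_def)
  then show "y \<in> range c <#> V" by (simp add: set_mult_range_c_V_eq)
qed

lemma continuous_pv: "continuous_map euclidean T pv"
proof -
  have "continuous_map euclidean euclideanreal (fst :: real \<times> 'v \<Rightarrow> real)"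
    and "continuous_map euclidean euclidean (snd :: real \<times> 'v \<Rightarrow> 'v)"
    unfolding continuous_map_iff_continuous2
    by (rule continuous_on_fst[OF continuous_on_id], rule continuous_on_snd[OF continuous_on_id])
  from continuous_map_compose[OF this(1) continuous_c] continuous_map_compose[OF this(2) continuous_f]
  show ?thesis unfolding pv_def[abs_def] by (intro continuous_map_mult) (simp_all add: o_def)
qed

lemma continuous_fst_inv_into_pv:
  assumes "compact K" and "inj_on pv K"
  shows "continuous_map (subtopology T (pv ` K)) euclideanreal (fst \<circ> inv_into K pv)"
proof -
  have "continuous_map (subtopology T (pv ` K)) (top_of_set K) (inv_into K pv)"
  proof (rule continuous_inverse_map)
    show "compact_space (top_of_set K)" using assms(1) by (simp add: compact_space_subtopology)
    show "continuous_map (top_of_set K) T pv" by (rule continuous_map_from_subtopology[OF continuous_pv])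
  qed (use Hausdorff_T assms(2) in auto)
  then show ?thesis
    by (rule continuous_map_compose) (simp add: continuous_on_fst[OF continuous_on_id])
qed

lemma curve_enters_compact_piece:
  assumes \<gamma>: "continuous_map euclideanreal T \<gamma>" and "range \<gamma> \<subseteq> range pv" and "d > 0"
  shows "\<exists>k n t0 \<epsilon>. \<epsilon> > 0 \<and>
           \<gamma> ` ball t0 \<epsilon> \<subseteq> pv ` ({of_int k * d .. of_int k * d + d} \<times> cball 0 (real n))"
proof -
  define K :: "int \<times> nat \<Rightarrow> (real \<times> 'v) set" where
    "K = (\<lambda>(k, n). {of_int k * d .. of_int k * d + d} \<times> cball 0 (real n))"
  have "closed {t. \<gamma> t \<in> pv ` K kn}" for kn
  proof -
    have "compact (K kn)" by (auto simp: K_def compact_Times split: prod.split)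
    then have "compactin T (pv ` K kn)"
      by (intro image_compactin[OF _ continuous_pv]) (simp add: compactin_euclidean_iff)
    then have "closedin T (pv ` K kn)" by (rule compactin_imp_closedin[OF Hausdorff_T])
    from closedin_continuous_map_preimage[OF \<gamma> this] show ?thesis by simp
  qed
  moreover have "(\<Union>kn. {t. \<gamma> t \<in> pv ` K kn}) = UNIV"
  proof -
    have "(\<Union>kn. K kn) = UNIV" unfolding K_def by (rule UN_interval_times_cball_eq_UNIV[OF \<open>d > 0\<close>])
    then have "\<gamma> t \<in> pv ` (\<Union>kn. K kn)" for t using assms(2) by auto
    then show ?thesis by (auto simp: image_UN)
  qed
  ultimately have "\<exists>kn. interior {t. \<gamma> t \<in> pv ` K kn} \<noteq> {}"
    by (rule closed_cover_has_interior) \<comment> \<open>Baire\<close>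
  then obtain kn where "interior {t. \<gamma> t \<in> pv ` K kn} \<noteq> {}" ..
  then obtain t0 \<epsilon> where "\<epsilon> > 0" and ball: "ball t0 \<epsilon> \<subseteq> {t. \<gamma> t \<in> pv ` K kn}"
    by (metis ex_in_conv mem_interior)
  obtain k n where "kn = (k, n)" by fastforce
  with \<open>\<epsilon> > 0\<close> ball show ?thesis
    by (intro exI[of _ k] exI[of _ n] exI[of _ t0] exI[of _ \<epsilon>]) (auto simp: K_def)
qed

lemma hom_Suc_mult_c_coordinate:
  assumes hom: "\<And>s t. \<gamma> (s + t) = \<gamma> s \<otimes> \<gamma> t" and y: "\<gamma> y = c s \<otimes> f x"
  shows "\<exists>x'. \<gamma> (real (Suc n) * y) = c (real (Suc n) * s) \<otimes> f x'"
proof (induction n)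
  case 0
  then show ?case using y by auto
next
  case (Suc n)
  then obtain x' where x': "\<gamma> (real (Suc n) * y) = c (real (Suc n) * s) \<otimes> f x'" by blast
  have "\<gamma> (real (Suc (Suc n)) * y) = \<gamma> (real (Suc n) * y) \<otimes> \<gamma> y"
    using hom[of "real (Suc n) * y" y] by (simp add: algebra_simps)
  also have "\<dots> = c (real (Suc (Suc n)) * s) \<otimes> f (act (- s) x' + x)"
    by (simp only: x' y mult_c_f) (simp add: algebra_simps)
  finally show ?case by blast
qed

lemma closed_kernel_c: "closed {s. c s = \<one>}"
proof -
  have "closedin T {\<one>}"
    using closedin_t1_singleton[OF Hausdorff_imp_t1_space[OF Hausdorff_T]] topspace_T by simp
  from closedin_continuous_map_preimage[OF continuous_c this] show ?thesis by simp
qed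

end

section \<open>Irreducible conjugation action\<close>

locale irreducible_vector_normalizer = vector_normalizer G T V f c
  for G (structure) and T :: "'g topology" and V and f :: "'v::euclidean_space \<Rightarrow> 'g" and c +
  assumes irreducible: "subspace S \<Longrightarrow> (\<And>s x. x \<in> S \<Longrightarrow> act s x \<in> S) \<Longrightarrow> S = {0} \<or> S = UNIV"
    and nontrivial: "\<exists>s x. act s x \<noteq> x"
begin

lemma act_id_or_fixpoint_free: "(\<forall>x. act s x = x) \<or> (\<forall>x. act s x = x \<longrightarrow> x = 0)"
proof -
  let ?S = "{x. act s x = x}"
  have "subspace ?S"
    using linear_act[of s] by (auto simp: subspace_def linear_0 linear_add linear_scale)
  moreover have "act t x \<in> ?S" if "x \<in> ?S" for t x
    using that act_commute[of s t x] by simp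
  ultimately have "?S = {0} \<or> ?S = UNIV" by (rule irreducible)
  then show ?thesis by auto
qed

lemma c_in_V_imp_one:
  assumes "c r \<in> V"
  shows "c r = \<one>"
proof -
  have c_r_central: "c s \<otimes> c r \<otimes> inv (c s) = c r" for s
  proof -
    have "c s \<otimes> c r = c r \<otimes> c s" by (simp flip: c_add add: add.commute)
    then show ?thesis by (simp add: m_assoc)
  qed
  have "act s (coord (c r)) = coord (c r)" for s
    by (rule injD[OF inj_f]) (simp add: f_act assms c_r_central)
  then have "coord (c r) = 0"
    using act_id_or_fixpoint_free nontrivial by blast
  then show ?thesis using f_coord[OF assms] by simp
qed

lemma c_mult_f_in_V_iff: "c s \<otimes> f x \<in> V \<longleftrightarrow> c s = \<one>"
proof
  assume "c s \<otimes> f x \<in> V"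
  then have "c s \<otimes> f x \<otimes> inv (f x) \<in> V"
    using subgroup_V by (simp add: subgroup.m_closed subgroup.m_inv_closed)
  then show "c s = \<one>" by (intro c_in_V_imp_one) (simp add: m_assoc)
qed simp

lemma c_mult_f_eqD:
  assumes "c s \<otimes> f x = c t \<otimes> f y"
  shows "c s = c t" and "x = y"
proof -
  have "c (- t + s) = inv (c t) \<otimes> (c s \<otimes> f x) \<otimes> inv (f x)"
    by (simp only: c_add c_minus) (simp add: m_assoc)
  also have "\<dots> = f (y - x)"
    by (simp add: assms f_diff m_assoc)
  finally have "c (- t + s) = \<one>" using c_in_V_imp_one by (metis f_in_V)
  then show "c s = c t" using c_add[of t "- t + s"] by simp
  then show "x = y" using assms by simp
qed

lemma kernel_c_discrete: "\<exists>\<delta>>0. \<forall>s. c s = \<one> \<longrightarrow> \<bar>s\<bar> < \<delta> \<longrightarrow> s = 0"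
proof (rule ccontr)
  assume "\<not> ?thesis"
  then have "{s. c s = \<one>} = UNIV"
    by (intro closed_real_subgroup_eq_UNIV closed_kernel_c) (auto simp: c_add c_minus)
  then have "c s = \<one>" for s by auto
  then have "act s x = x" for s x by (simp add: act_def)
  then show False using nontrivial by blast
qed

lemma inj_on_c_short_intervals: "\<exists>\<delta>>0. \<forall>a. inj_on c {a .. a + \<delta>}"
proof -
  obtain \<delta> where "\<delta> > 0" and \<delta>: "\<And>s. c s = \<one> \<Longrightarrow> \<bar>s\<bar> < \<delta> \<Longrightarrow> s = 0"
    using kernel_c_discrete by blast
  have "inj_on c {a .. a + \<delta> / 2}" for a
  proof (rule inj_onI)
    fix s t assume "s \<in> {a .. a + \<delta> / 2}" "t \<in> {a .. a + \<delta> / 2}" "c s = c t"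
    then have "c (s - t) = \<one>" "\<bar>s - t\<bar> < \<delta>" using \<open>\<delta> > 0\<close> by (auto simp: c_diff)
    then show "s = t" using \<delta>[of "s - t"] by simp
  qed
  then show ?thesis using \<open>\<delta> > 0\<close> by (intro exI[of _ "\<delta> / 2"]) auto
qed

lemma inj_on_pv_Times: "inj_on c S \<Longrightarrow> inj_on pv (S \<times> B)"
proof (rule inj_onI, clarify)
  fix s x t y assume "inj_on c S" "s \<in> S" "t \<in> S" "pv (s, x) = pv (t, y)"
  then have "c s = c t" "x = y" using c_mult_f_eqD[of s x t y] by (simp_all add: pv_def)
  then show "s = t \<and> x = y" using \<open>inj_on c S\<close> \<open>s \<in> S\<close> \<open>t \<in> S\<close> by (simp add: inj_on_eq_iff)
qed

lemma continuous_c_coordinate_somewhere: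
  assumes \<gamma>: "continuous_map euclideanreal T \<gamma>" and in_H: "range \<gamma> \<subseteq> range c <#> V"
  shows "\<exists>t0 \<epsilon> \<sigma>. \<epsilon> > 0 \<and> continuous_on (ball t0 \<epsilon>) \<sigma> \<and>
           (\<forall>t\<in>ball t0 \<epsilon>. \<exists>x. \<gamma> t = c (\<sigma> t) \<otimes> f x)"
proof -
  obtain d where "d > 0" and inj_c: "\<And>a. inj_on c {a .. a + d}"
    using inj_on_c_short_intervals by blast
  obtain k n t0 \<epsilon> where "\<epsilon> > 0"
    and ball: "\<gamma> ` ball t0 \<epsilon> \<subseteq> pv ` ({of_int k * d .. of_int k * d + d} \<times> cball 0 (real n))"
    using curve_enters_compact_piece[OF \<gamma> in_H[unfolded set_mult_range_c_V_eq] \<open>d > 0\<close>] by blast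
  define K where "K = {of_int k * d .. of_int k * d + d} \<times> cball (0::'v) (real n)"
  have "compact K" by (simp add: K_def compact_Times)
  moreover have "inj_on pv K" unfolding K_def by (rule inj_on_pv_Times[OF inj_c])
  \<comment> \<open>so \<open>pv\<close> restricted to the compact piece \<open>K\<close> has a continuous inverse\<close>
  ultimately have inv_cont: "continuous_map (subtopology T (pv ` K)) euclideanreal (fst \<circ> inv_into K pv)"
    by (rule continuous_fst_inv_into_pv)
  have "continuous_map (top_of_set (ball t0 \<epsilon>)) (subtopology T (pv ` K)) \<gamma>"
    by (rule continuous_map_into_subtopology[OF continuous_map_from_subtopology[OF \<gamma>]])
       (use ball in \<open>simp add: K_def Pi_iff image_subset_iff\<close>)
  from continuous_map_compose[OF this inv_cont]
  have "continuous_on (ball t0 \<epsilon>) (fst \<circ> inv_into K pv \<circ> \<gamma>)" by simp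
  moreover have "\<exists>x. \<gamma> t = c ((fst \<circ> inv_into K pv \<circ> \<gamma>) t) \<otimes> f x" if "t \<in> ball t0 \<epsilon>" for t
  proof -
    have "\<gamma> t \<in> pv ` K" using that ball by (auto simp: K_def)
    then have "pv (inv_into K pv (\<gamma> t)) = \<gamma> t" by (rule f_inv_into_f)
    then show ?thesis unfolding pv_def by (metis comp_apply)
  qed
  ultimately show ?thesis using \<open>\<epsilon> > 0\<close> by blast
qed

lemma continuous_c_coordinate_near_zero:
  assumes \<gamma>: "continuous_map euclideanreal T \<gamma>" and hom: "\<And>s t. \<gamma> (s + t) = \<gamma> s \<otimes> \<gamma> t"
    and in_H: "range \<gamma> \<subseteq> range c <#> V"
  shows "\<exists>\<epsilon> \<tau>. \<epsilon> > 0 \<and> continuous_on (ball 0 \<epsilon>) \<tau> \<and> \<tau> 0 = 0 \<and>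
           (\<forall>h. \<bar>h\<bar> < \<epsilon> \<longrightarrow> (\<exists>x. \<gamma> h = c (\<tau> h) \<otimes> f x))"
proof -
  obtain t0 \<epsilon> \<sigma> where "\<epsilon> > 0" and cont: "continuous_on (ball t0 \<epsilon>) \<sigma>"
    and dec: "\<And>t. t \<in> ball t0 \<epsilon> \<Longrightarrow> \<exists>x. \<gamma> t = c (\<sigma> t) \<otimes> f x"
    using continuous_c_coordinate_somewhere[OF \<gamma> in_H] by blast
  define \<tau> where "\<tau> h = \<sigma> (t0 + h) - \<sigma> t0" for h
  have "continuous_on (ball 0 \<epsilon>) \<tau>"
    unfolding \<tau>_def
    by (intro continuous_intros continuous_on_compose2[OF cont]) (auto simp: dist_real_def)
  moreover have "\<exists>x. \<gamma> h = c (\<tau> h) \<otimes> f x" if "\<bar>h\<bar> < \<epsilon>" for h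
  proof -
    have "t0 + h \<in> ball t0 \<epsilon>" "t0 \<in> ball t0 \<epsilon>" using that \<open>\<epsilon> > 0\<close> by (simp_all add: dist_real_def)
    then obtain x1 x0 where x1: "\<gamma> (t0 + h) = c (\<sigma> (t0 + h)) \<otimes> f x1" and x0: "\<gamma> t0 = c (\<sigma> t0) \<otimes> f x0"
      using dec by meson
    have "\<gamma> h = \<gamma> (t0 + h) \<otimes> inv (\<gamma> t0)"
      using hom[of h t0] continuous_map_in_carrier[OF \<gamma>] by (simp add: add.commute m_assoc)
    also have "\<dots> = c (\<tau> h) \<otimes> f (act (\<sigma> t0) x1 + act (\<sigma> t0) (- x0))"
      by (simp only: x1 x0 inv_c_f mult_c_f) (simp add: \<tau>_def)
    finally show ?thesis by blast
  qed
  ultimately show ?thesis using \<open>\<epsilon> > 0\<close> by (intro exI[of _ \<epsilon>] exI[of _ \<tau>]) (simp add: \<tau>_def)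
qed

lemma c_coordinate_linear_near_zero:
  assumes \<gamma>: "continuous_map euclideanreal T \<gamma>" and hom: "\<And>s t. \<gamma> (s + t) = \<gamma> s \<otimes> \<gamma> t"
    and in_H: "range \<gamma> \<subseteq> range c <#> V"
  shows "\<exists>e l. e > 0 \<and> (\<forall>h. \<bar>h\<bar> < e \<longrightarrow> (\<exists>x. \<gamma> h = c (h * l) \<otimes> f x))"
proof -
  obtain \<epsilon> \<tau> where "\<epsilon> > 0" and cont: "continuous_on (ball 0 \<epsilon>) \<tau>" and "\<tau> 0 = 0"
    and dec: "\<And>h. \<bar>h\<bar> < \<epsilon> \<Longrightarrow> \<exists>x. \<gamma> h = c (\<tau> h) \<otimes> f x"
    using continuous_c_coordinate_near_zero[OF assms] by blast
  obtain \<delta> where "\<delta> > 0" and \<delta>: "\<And>s. c s = \<one> \<Longrightarrow> \<bar>s\<bar> < \<delta> \<Longrightarrow> s = 0"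
    using kernel_c_discrete by blast
  obtain e where "e > 0" "e \<le> \<epsilon>" and small: "\<And>h. \<bar>h\<bar> < e \<Longrightarrow> \<bar>\<tau> h\<bar> < \<delta> / 3"
  proof -
    obtain d where "d > 0" and d: "\<And>h. h \<in> ball 0 \<epsilon> \<Longrightarrow> dist h 0 < d \<Longrightarrow> dist (\<tau> h) (\<tau> 0) < \<delta> / 3"
      using cont \<open>\<epsilon> > 0\<close> \<open>\<delta> > 0\<close> unfolding continuous_on_iff
      by (metis centre_in_ball divide_pos_pos zero_less_numeral)
    show ?thesis
      by (rule that[of "min d \<epsilon>"]) (use \<open>d > 0\<close> \<open>\<epsilon> > 0\<close> d \<open>\<tau> 0 = 0\<close> in \<open>auto simp: dist_real_def\<close>)
  qed
  \<comment> \<open>\<open>\<tau>\<close> is additive up to the kernel of \<open>c\<close>, which is discrete\<close>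
  have "\<tau> (h + k) = \<tau> h + \<tau> k" if hk: "\<bar>h\<bar> < e" "\<bar>k\<bar> < e" "\<bar>h + k\<bar> < e" for h k
  proof -
    obtain x y z where "\<gamma> h = c (\<tau> h) \<otimes> f x" "\<gamma> k = c (\<tau> k) \<otimes> f y"
      and "\<gamma> (h + k) = c (\<tau> (h + k)) \<otimes> f z"
      using dec[of h] dec[of k] dec[of "h + k"] hk \<open>e \<le> \<epsilon>\<close> by auto
    then have "c (\<tau> (h + k)) \<otimes> f z = c (\<tau> h + \<tau> k) \<otimes> f (act (- \<tau> k) x + y)"
      using hom[of h k] by (simp add: mult_c_f)
    then have "c (\<tau> (h + k)) = c (\<tau> h + \<tau> k)" by (rule c_mult_f_eqD(1))
    then have "c (\<tau> (h + k) - (\<tau> h + \<tau> k)) = \<one>" by (simp add: c_diff)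
    moreover have "\<bar>\<tau> (h + k) - (\<tau> h + \<tau> k)\<bar> < \<delta>"
      using small[OF hk(1)] small[OF hk(2)] small[OF hk(3)] by linarith
    ultimately show ?thesis using \<delta> by fastforce
  qed
  moreover have "continuous_on (ball 0 e) \<tau>"
    using continuous_on_subset[OF cont] \<open>e \<le> \<epsilon>\<close> by (simp add: subset_ball)
  ultimately have "\<exists>l. \<forall>h. \<bar>h\<bar> < e \<longrightarrow> \<tau> h = h *\<^sub>R l"
    by (rule locally_additive_imp_linear[OF \<open>e > 0\<close>])
  then obtain l where l: "\<And>h. \<bar>h\<bar> < e \<Longrightarrow> \<tau> h = h * l" by auto
  have "\<exists>x. \<gamma> h = c (h * l) \<otimes> f x" if "\<bar>h\<bar> < e" for h
    using dec[of h] l[OF that] that \<open>e \<le> \<epsilon>\<close> by auto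
  then show ?thesis using \<open>e > 0\<close> by blast
qed

lemma one_param_subgroup_c_coordinate_linear:
  assumes \<gamma>: "continuous_map euclideanreal T \<gamma>" and hom: "\<And>s t. \<gamma> (s + t) = \<gamma> s \<otimes> \<gamma> t"
    and in_H: "range \<gamma> \<subseteq> range c <#> V"
  shows "\<exists>l. \<forall>t. \<exists>x. \<gamma> t = c (l * t) \<otimes> f x"
proof -
  obtain e l where "e > 0" and dec: "\<And>h. \<bar>h\<bar> < e \<Longrightarrow> \<exists>x. \<gamma> h = c (h * l) \<otimes> f x"
    using c_coordinate_linear_near_zero[OF assms] by blast
  have "\<exists>x. \<gamma> t = c (l * t) \<otimes> f x" for t
  proof -
    obtain n where "\<bar>t\<bar> / e < real n" using reals_Archimedean2 by blast
    then have "\<bar>t\<bar> < real n * e" using \<open>e > 0\<close> by (simp add: pos_divide_less_eq)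
    moreover have "real n * e \<le> real (Suc n) * e" using \<open>e > 0\<close> by simp
    ultimately have "\<bar>t / real (Suc n)\<bar> < e"
      by (simp add: abs_divide pos_divide_less_eq mult.commute)
    then obtain x where "\<gamma> (t / real (Suc n)) = c (t / real (Suc n) * l) \<otimes> f x"
      using dec by blast
    from hom_Suc_mult_c_coordinate[OF hom this, of n] show ?thesis by (simp add: mult.commute)
  qed
  then show ?thesis by blast
qed

lemma cocycle_is_coboundary:
  assumes cocycle: "\<And>r u. X (r + u) = act (- u) (X r) + X u"
  shows "\<exists>w. \<forall>u. X u = act (- u) w - w"
proof -
  obtain s0 where "\<exists>x. act s0 x \<noteq> x" using nontrivial by blast
  then have free: "\<And>x. act s0 x = x \<Longrightarrow> x = 0" using act_id_or_fixpoint_free by blast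
  \<comment> \<open>compare the cocycle identity for \<open>(- s0, u)\<close> and \<open>(u, - s0)\<close>\<close>
  have swap: "act s0 (X u) - X u = act (- u) (X (- s0)) - X (- s0)" for u
    using cocycle[of "- s0" u] cocycle[of u "- s0"] by (simp add: algebra_simps)
  have bij: "bij (\<lambda>w. act s0 w - w)" by (rule bij_act_minus_id[OF free])
  obtain w where w: "act s0 w - w = X (- s0)"
    using surjD[OF bij_is_surj[OF bij], of "X (- s0)"] by auto
  have "X u = act (- u) w - w" for u
  proof -
    have "act s0 (X u) - X u = act (- u) (act s0 w - w) - (act s0 w - w)"
      by (simp only: swap[of u] w)
    also have "\<dots> = act s0 (act (- u) w - w) - (act (- u) w - w)"
      by (simp add: act_diff act_commute[of "- u" s0 w])
    finally have "act s0 (X u) - X u = act s0 (act (- u) w - w) - (act (- u) w - w)" .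
    then show ?thesis by (rule injD[OF bij_is_inj[OF bij]])
  qed
  then show ?thesis by blast
qed

lemma one_param_subgroup_in_range_c_V:
  assumes "one_param_subgroup G T Q" and "Q \<subseteq> range c <#> V"
  shows "Q \<subseteq> V \<or> (\<exists>w\<in>V. Q = (\<lambda>q. w \<otimes> q \<otimes> inv w) ` range c)"
proof -
  obtain \<gamma> where \<gamma>: "continuous_map euclideanreal T \<gamma>" and hom: "\<And>s t. \<gamma> (s + t) = \<gamma> s \<otimes> \<gamma> t"
    and Q: "Q = range \<gamma>"
    using assms(1) unfolding one_param_subgroup_def by blast
  obtain l where "\<forall>t. \<exists>x. \<gamma> t = c (l * t) \<otimes> f x"
    using one_param_subgroup_c_coordinate_linear[OF \<gamma> hom] assms(2) Q by blast
  then obtain X where X: "\<And>t. \<gamma> t = c (l * t) \<otimes> f (X t)" by metis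
  show ?thesis
  proof (cases "l = 0")
    case True
    then show ?thesis using X Q by auto
  next
    case False
    define Y where "Y r = X (r / l)" for r
    have Y: "\<gamma> (r / l) = c r \<otimes> f (Y r)" for r
      using X[of "r / l"] False by (simp add: Y_def)
    have "Y (r + u) = act (- u) (Y r) + Y u" for r u
    proof -
      have "c (r + u) \<otimes> f (Y (r + u)) = (c r \<otimes> f (Y r)) \<otimes> (c u \<otimes> f (Y u))"
        using hom[of "r / l" "u / l"] by (simp only: Y add_divide_distrib[symmetric])
      also have "\<dots> = c (r + u) \<otimes> f (act (- u) (Y r) + Y u)" by (rule mult_c_f)
      finally show ?thesis by (rule c_mult_f_eqD(2))
    qed
    then obtain w where w: "\<And>u. Y u = act (- u) w - w"
      using cocycle_is_coboundary by blast
    have "surj (\<lambda>r. r / l)" using False by (intro surjI[of _ "\<lambda>t. t * l"]) simp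
    then have "range \<gamma> = (\<lambda>r. \<gamma> (r / l)) ` UNIV"
      using image_image[of \<gamma> "\<lambda>r. r / l" UNIV] by simp
    also have "\<dots> = (\<lambda>r. f w \<otimes> c r \<otimes> inv (f w)) ` UNIV"
      by (simp add: Y w conj_c)
    also have "\<dots> = (\<lambda>q. f w \<otimes> q \<otimes> inv (f w)) ` range c"
      by (simp add: image_image)
    finally show ?thesis using Q f_in_V by blast
  qed
qed

lemma one_param_subgroups_containing:
  assumes "c s \<noteq> \<one>"
  shows "{Q. one_param_subgroup G T Q \<and> Q \<subseteq> range c <#> V \<and> c s \<otimes> f x \<in> Q}
         = (\<lambda>w. (\<lambda>q. f w \<otimes> q \<otimes> inv (f w)) ` range c) ` {w. act (- s) w - w = x}"
proof (rule Set.set_eqI, rule iffI)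
  fix Q assume "Q \<in> {Q. one_param_subgroup G T Q \<and> Q \<subseteq> range c <#> V \<and> c s \<otimes> f x \<in> Q}"
  then have Q: "one_param_subgroup G T Q" "Q \<subseteq> range c <#> V" "c s \<otimes> f x \<in> Q" by auto
  have "\<not> Q \<subseteq> V" using Q(3) assms c_mult_f_in_V_iff by blast
  then obtain u where "u \<in> V" "Q = (\<lambda>q. u \<otimes> q \<otimes> inv u) ` range c"
    using one_param_subgroup_in_range_c_V[OF Q(1,2)] by blast
  then obtain w where w: "Q = (\<lambda>q. f w \<otimes> q \<otimes> inv (f w)) ` range c"
    using f_coord by metis
  then obtain r where "c s \<otimes> f x = c r \<otimes> f (act (- r) w - w)"
    using Q(3) by (auto simp: conj_c)
  then have "c s = c r" and "x = act (- r) w - w" by (auto dest: c_mult_f_eqD)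
  then have "act (- s) w - w = x" using act_cong[of "- s" "- r"] by (simp add: c_minus)
  then show "Q \<in> (\<lambda>w. (\<lambda>q. f w \<otimes> q \<otimes> inv (f w)) ` range c) ` {w. act (- s) w - w = x}"
    using w by blast
next
  fix Q assume "Q \<in> (\<lambda>w. (\<lambda>q. f w \<otimes> q \<otimes> inv (f w)) ` range c) ` {w. act (- s) w - w = x}"
  then obtain w where x: "x = act (- s) w - w" and Q: "Q = (\<lambda>q. f w \<otimes> q \<otimes> inv (f w)) ` range c"
    by auto
  have "c s \<otimes> f x \<in> Q" unfolding Q x conj_c[symmetric] by blast
  then show "Q \<in> {Q. one_param_subgroup G T Q \<and> Q \<subseteq> range c <#> V \<and> c s \<otimes> f x \<in> Q}"
    using one_param_subgroup_conj conj_range_c_subset Q by blast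
qed

lemma ex1_one_param_subgroup_containing:
  assumes "c s \<noteq> \<one>" and "\<exists>u\<in>V. c s \<otimes> u \<otimes> inv (c s) \<noteq> u" and "v \<in> V"
  shows "\<exists>!Q. one_param_subgroup G T Q \<and> Q \<subseteq> range c <#> V \<and> c s \<otimes> v \<in> Q"
proof -
  have "\<exists>y. act s y \<noteq> y" using assms(2) act_id_iff by blast
  then have "act (- s) y = y \<Longrightarrow> y = 0" for y
    using act_id_or_fixpoint_free[of s] act_act_minus[of s y] by metis
  then have bij: "bij (\<lambda>w. act (- s) w - w)" by (rule bij_act_minus_id)
  obtain w where w: "act (- s) w - w = coord v"
    using surjD[OF bij_is_surj[OF bij], of "coord v"] by auto
  have unique: "y = w" if "act (- s) y - y = coord v" for y
    using injD[OF bij_is_inj[OF bij], of y w] that w by simp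
  have "{w. act (- s) w - w = coord v} = {w}" using w by (auto intro: unique)
  then show ?thesis
    using one_param_subgroups_containing[OF assms(1), of "coord v"] assms(3) by (auto simp: set_eq_iff)
qed

lemma no_one_param_subgroup_containing:
  assumes "c s \<noteq> \<one>" and "\<forall>u\<in>V. c s \<otimes> u \<otimes> inv (c s) = u" and "v \<in> V" and "v \<noteq> \<one>"
  shows "\<nexists>Q. one_param_subgroup G T Q \<and> Q \<subseteq> range c <#> V \<and> c s \<otimes> v \<in> Q"
proof -
  have "\<forall>x. act s x = x" using assms(2) act_id_iff by blast
  then have "act (- s) w - w = 0" for w using act_minus_act[of s w] by simp
  moreover have "coord v \<noteq> 0" using assms(3,4) coord_eq_0_iff by simp
  ultimately show ?thesis
    using one_param_subgroups_containing[OF assms(1), of "coord v"] assms(3) by (auto simp: set_eq_iff)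
qed

end

theorem proposition2p1:
  fixes G (structure)
    and T :: "'g topology"
    and A :: "('g set \<times> ('g \<Rightarrow> 'e::euclidean_space)) set"
    and V :: "'g set" and f :: "'v::euclidean_space \<Rightarrow> 'g"
    and P :: "'g set" and p :: 'g
  assumes lie: "lie_group G T A"
    and conn: "connected_space T"
    and vec: "vector_subgroup_param G T V f"
    and P1: "one_param_subgroup G T P"
    and normalizes: "\<forall>q\<in>P. \<forall>v\<in>V. q \<otimes> v \<otimes> inv q \<in> V"
    and irreducible: "\<forall>S. subspace S \<and> (\<forall>q\<in>P. \<forall>x\<in>S. inv_into UNIV f (q \<otimes> f x \<otimes> inv q) \<in> S)
                        \<longrightarrow> S = {0} \<or> S = UNIV"
    and nontrivial: "\<exists>q\<in>P. \<exists>v\<in>V. q \<otimes> v \<otimes> inv q \<noteq> v"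
    and pP: "p \<in> P" and p_ne: "p \<noteq> \<one>"
  shows "(\<forall>Q. one_param_subgroup G T Q \<and> Q \<subseteq> P <#> V \<longrightarrow>
             Q \<subseteq> V \<or> (\<exists>w\<in>V. Q = (\<lambda>q. w \<otimes> q \<otimes> inv w) ` P))
       \<and> ((\<exists>v\<in>V. p \<otimes> v \<otimes> inv p \<noteq> v) \<longrightarrow>
             (\<forall>v\<in>V. \<exists>!Q. one_param_subgroup G T Q \<and> Q \<subseteq> P <#> V \<and> p \<otimes> v \<in> Q))
       \<and> ((\<forall>v\<in>V. p \<otimes> v \<otimes> inv p = v) \<longrightarrow>
             (\<forall>v\<in>V. v \<noteq> \<one> \<longrightarrow> \<not> (\<exists>Q. one_param_subgroup G T Q \<and> Q \<subseteq> P <#> V \<and> p \<otimes> v \<in> Q)))"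
proof -
  obtain c where c: "continuous_map euclideanreal T c" "\<And>s t. c (s + t) = c s \<otimes> c t"
    and P: "P = range c"
    using P1 unfolding one_param_subgroup_def by blast
  have normalizer: "vector_normalizer G T V f c"
    by (intro vector_normalizer.intro vector_normalizer_axioms.intro)
      (use lie vec normalizes c in \<open>auto simp: P lie_group_def smooth_map_def\<close>)
  then interpret vector_normalizer G T V f c .
  interpret irreducible_vector_normalizer G T V f c
    by (intro irreducible_vector_normalizer.intro[OF normalizer] irreducible_vector_normalizer_axioms.intro)
      (use irreducible nontrivial act_id_iff in \<open>auto simp: P act_def coord_def\<close>)
  obtain s where p: "p = c s" and "c s \<noteq> \<one>" using pP p_ne P by blast
  show ?thesis
    unfolding P p
  proof (intro conjI impI allI ballI)
    show "Q \<subseteq> V \<or> (\<exists>w\<in>V. Q = (\<lambda>q. w \<otimes> q \<otimes> inv w) ` range c)"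
      if "one_param_subgroup G T Q \<and> Q \<subseteq> range c <#> V" for Q
      using that by (intro one_param_subgroup_in_range_c_V) auto
  qed (simp_all add: ex1_one_param_subgroup_containing[OF \<open>c s \<noteq> \<one>\<close>]
      no_one_param_subgroup_containing[OF \<open>c s \<noteq> \<one>\<close>])
qed

end
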